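(* Let $\mathbb{F}$ be a field and $n,d\ge 1$. Let $X^1,\dots,X^d$ be pairwise disjoint sets of $n^2$ variables each, $X^i=\{x^i_{jk}: j,k\in[n]\}$, and let $A^i$ be the $n\times n$ matrix with $(j,k)$ entry $x^i_{jk}$. Let $f\in\mathbb{F}[X^1\cup\dots\cup X^d]$ be the $(1,1)$ entry of the product $A^1A^2\cdots A^d$. Then any homogeneous $\Sigma\Pi\Sigma$ circuit computing the product of these $d$ matrices (i.e., computing the output polynomial $f$) has size $\Omega(n^{d-1}/2^d)$.
   Context: An arithmetic circuit over $\mathbb{F}$ is a directed acyclic graph whose in-degree-0 gates are labelled by variables or field constants and whose internal gates are plus or product gates; its size is its number of gates. A $\Sigma\Pi\Sigma$ circuit is a levelled depth-3 circuit with a single plus gate at the top, product gates at the middle level and plus gates at the bottom level, so it computes $\sum_{i=1}^k\prod_{j=1}^{\deg(P_i)} l_{i,j}$ with affine forms $l_{i,j}$; $k$ is the top fan-in. It is homogeneous if every bottom plus gate computes a homogeneous linear form. The paper studies the product of matrices through the single output polynomial given by the $(1,1)$ entry. *)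

theory Defs
  imports Complex_Main "HOL-Library.Poly_Mapping"
begin

(* Variables are triples (i,j,k) standing for x^{i+1}_{j+1,k+1} (0-indexed). *)
type_synonym 'a mpoly = "((nat \<times> nat \<times> nat) \<Rightarrow>\<^sub>0 nat) \<Rightarrow>\<^sub>0 'a"

definition mvar :: "nat \<Rightarrow> nat \<Rightarrow> nat \<Rightarrow> 'a::comm_ring_1 mpoly" where
  "mvar i j k = Poly_Mapping.single (Poly_Mapping.single (i, j, k) 1) 1"

(* (j,k) entry of A^1 A^2 ... A^t, with A^{i+1} = (mvar i j k)_{j,k<n};
   t = 0 gives the identity matrix *)
fun matprod :: "nat \<Rightarrow> nat \<Rightarrow> nat \<Rightarrow> nat \<Rightarrow> 'a::comm_ring_1 mpoly" where
  "matprod n 0 j k = (if j = k then 1 else 0)"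
| "matprod n (Suc t) j k = (\<Sum>l<n. matprod n t j l * mvar t l k)"

definition mdeg :: "((nat \<times> nat \<times> nat) \<Rightarrow>\<^sub>0 nat) \<Rightarrow> nat" where
  "mdeg m = (\<Sum>v\<in>Poly_Mapping.keys m. Poly_Mapping.lookup m v)"

definition hom_linear :: "'a::comm_ring_1 mpoly \<Rightarrow> bool" where
  "hom_linear l \<longleftrightarrow> (\<forall>m\<in>Poly_Mapping.keys l. mdeg m = 1)"

(* A homogeneous Sigma-Pi-Sigma circuit: a list of product gates, each given by
   the list of (homogeneous linear) forms computed by its bottom plus gates. *)
definition hom_SPS :: "'a::comm_ring_1 mpoly list list \<Rightarrow> bool" where
  "hom_SPS C \<longleftrightarrow> (\<forall>P\<in>set C. \<forall>l\<in>set P. hom_linear l)"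

definition SPS_eval :: "'a::comm_ring_1 mpoly list list \<Rightarrow> 'a mpoly" where
  "SPS_eval C = (\<Sum>P\<leftarrow>C. prod_list P)"

definition SPS_forms :: "'a::comm_ring_1 mpoly list list \<Rightarrow> 'a mpoly set" where
  "SPS_forms C = (\<Union>P\<in>set C. set P)"

definition SPS_vars :: "'a::comm_ring_1 mpoly list list \<Rightarrow> (nat \<times> nat \<times> nat) set" where
  "SPS_vars C = (\<Union>l\<in>SPS_forms C. \<Union>m\<in>Poly_Mapping.keys l. Poly_Mapping.keys m)"

(* number of gates: top plus gate + product gates + (shared) bottom plus gates
   + (shared) variable input gates *)
definition SPS_size :: "'a::comm_ring_1 mpoly list list \<Rightarrow> nat" where
  "SPS_size C = 1 + length C + card (SPS_forms C) + card (SPS_vars C)"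

end

theory Submission
  imports Defs
begin

text \<open>
  Partial derivative method. Since the output is homogeneous of degree d, only the product gates
  of fan-in d contribute, so the output lies in the span of the at most 2^d sub-products of each
  such gate; that span is closed under partial derivatives, because the derivative of a
  homogeneous linear form is a constant. On the other hand, a monomial of the output is a path
  0 = g_0, g_1, ..., g_d = 0 through [n], and differentiating by the variables of its odd-indexed
  edges kills every other path, leaving the monomial of its even-indexed edges; these monomials
  are distinct for the n^{d-1} paths. Comparing dimensions gives n^{d-1} \<le> 2^d times the number of
  product gates.
\<close>

section \<open>Partial derivatives\<close>

lift_definition mpoly_deriv :: "(nat \<times> nat \<times> nat) \<Rightarrow> 'a::comm_ring_1 mpoly \<Rightarrow> 'a mpoly" is
  "\<lambda>v p m. of_nat (Poly_Mapping.lookup m v + 1) * p (m + Poly_Mapping.single v 1)"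
proof -
  fix v :: "nat \<times> nat \<times> nat" and p :: "((nat \<times> nat \<times> nat) \<Rightarrow>\<^sub>0 nat) \<Rightarrow> 'a"
  assume fin: "finite {m. p m \<noteq> 0}"
  have "{m. of_nat (Poly_Mapping.lookup m v + 1) * p (m + Poly_Mapping.single v 1) \<noteq> (0::'a)}
        \<subseteq> (\<lambda>m. m - Poly_Mapping.single v 1) ` {m. p m \<noteq> 0}"
    by (force intro: image_eqI[where x = "_ + Poly_Mapping.single v 1"])
  then show "finite {m. of_nat (Poly_Mapping.lookup m v + 1) * p (m + Poly_Mapping.single v 1) \<noteq> (0::'a)}"
    using fin by (meson finite_imageI finite_subset)
qed

lemma lookup_mpoly_deriv:
  "Poly_Mapping.lookup (mpoly_deriv v p) m =
     of_nat (Poly_Mapping.lookup m v + 1) * Poly_Mapping.lookup p (m + Poly_Mapping.single v 1)"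
  by (simp add: mpoly_deriv.rep_eq)

lemma mpoly_deriv_add: "mpoly_deriv v (p + q) = mpoly_deriv v p + mpoly_deriv v q"
  by (rule poly_mapping_eqI) (simp add: lookup_mpoly_deriv lookup_add distrib_left)

lemma mpoly_deriv_0 [simp]: "mpoly_deriv v 0 = 0"
  by (rule poly_mapping_eqI) (simp add: lookup_mpoly_deriv)

lemma mpoly_deriv_sum: "mpoly_deriv v (sum f A) = (\<Sum>a\<in>A. mpoly_deriv v (f a))"
  by (induction A rule: infinite_finite_induct) (auto simp: mpoly_deriv_add)

lemma mpoly_deriv_single:
  "mpoly_deriv v (Poly_Mapping.single m c) =
     (if Poly_Mapping.lookup m v = 0 then 0
      else Poly_Mapping.single (m - Poly_Mapping.single v 1) (of_nat (Poly_Mapping.lookup m v) * c))"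
proof (cases "Poly_Mapping.lookup m v = 0")
  case True
  have "m \<noteq> m' + Poly_Mapping.single v 1" for m'
    using True by (auto simp: lookup_add)
  with True show ?thesis
    by (intro poly_mapping_eqI) (simp add: lookup_mpoly_deriv lookup_single)
next
  case False
  have shift: "m = m' + Poly_Mapping.single v 1 \<longleftrightarrow> m - Poly_Mapping.single v 1 = m'" for m'
  proof
    assume "m - Poly_Mapping.single v 1 = m'"
    then show "m = m' + Poly_Mapping.single v 1"
      using False by (intro poly_mapping_eqI) (auto simp: lookup_add lookup_minus lookup_single when_def)
  qed simp
  have "Poly_Mapping.lookup m' v + 1 = Poly_Mapping.lookup m v" if "m - Poly_Mapping.single v 1 = m'" for m'
    using that False by (auto simp: lookup_minus)
  moreover have "m - Poly_Mapping.single v 1 + Poly_Mapping.single v 1 = m"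
    using shift by metis
  ultimately show ?thesis
    using False by (intro poly_mapping_eqI) (auto simp: lookup_mpoly_deriv lookup_single when_def shift simp del: of_nat_Suc)
qed

lemma mpoly_sum_single_lookup:
  "p = (\<Sum>m\<in>Poly_Mapping.keys p. Poly_Mapping.single m (Poly_Mapping.lookup p m))"
proof (rule poly_mapping_eqI)
  fix k
  have "Poly_Mapping.lookup (\<Sum>m\<in>Poly_Mapping.keys p. Poly_Mapping.single m (Poly_Mapping.lookup p m)) k
      = (\<Sum>m\<in>Poly_Mapping.keys p. (Poly_Mapping.lookup p m when m = k))"
    by (simp add: lookup_sum lookup_single)
  also have "\<dots> = Poly_Mapping.lookup p k"
    by (cases "k \<in> Poly_Mapping.keys p") (auto simp: when_def in_keys_iff)
  finally show "Poly_Mapping.lookup p k =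
      Poly_Mapping.lookup (\<Sum>m\<in>Poly_Mapping.keys p. Poly_Mapping.single m (Poly_Mapping.lookup p m)) k"
    by simp
qed

lemma diff_single_add_comm:
  fixes a b :: "'v \<Rightarrow>\<^sub>0 nat"
  assumes "Poly_Mapping.lookup a v \<noteq> 0"
  shows "a - Poly_Mapping.single v 1 + b = a + b - Poly_Mapping.single v 1"
  using assms by (intro poly_mapping_eqI) (auto simp: lookup_add lookup_minus lookup_single when_def)

lemma mpoly_deriv_mult_single:
  "mpoly_deriv v (Poly_Mapping.single a x * Poly_Mapping.single b y) =
     mpoly_deriv v (Poly_Mapping.single a x) * Poly_Mapping.single b y
     + Poly_Mapping.single a x * mpoly_deriv v (Poly_Mapping.single b y)"
proof -
  let ?e = "Poly_Mapping.single v (1::nat)"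
  have ab: "Poly_Mapping.lookup (a + b) v = Poly_Mapping.lookup a v + Poly_Mapping.lookup b v"
    by (simp add: lookup_add)
  have a: "a - ?e + b = a + b - ?e" if "Poly_Mapping.lookup a v \<noteq> 0"
    using that by (rule diff_single_add_comm)
  then have a': "b + (a - ?e) = a + b - ?e" if "Poly_Mapping.lookup a v \<noteq> 0"
    using that by (simp add: add.commute)
  have b: "a + (b - ?e) = a + b - ?e" if "Poly_Mapping.lookup b v \<noteq> 0"
    using diff_single_add_comm[OF that, of a] by (simp add: add.commute)
  show ?thesis
  proof (cases "Poly_Mapping.lookup a v = 0"; cases "Poly_Mapping.lookup b v = 0")
    assume nz: "Poly_Mapping.lookup a v \<noteq> 0" "Poly_Mapping.lookup b v \<noteq> 0"
    then have "mpoly_deriv v (Poly_Mapping.single a x * Poly_Mapping.single b y) =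
        Poly_Mapping.single (a + b - ?e) (of_nat (Poly_Mapping.lookup a v) * x * y)
        + Poly_Mapping.single (a + b - ?e) (x * (of_nat (Poly_Mapping.lookup b v) * y))"
      by (simp add: mult_single mpoly_deriv_single ab algebra_simps flip: single_add)
    also have "\<dots> = Poly_Mapping.single (a - ?e + b) (of_nat (Poly_Mapping.lookup a v) * x * y)
        + Poly_Mapping.single (a + (b - ?e)) (x * (of_nat (Poly_Mapping.lookup b v) * y))"
      by (simp only: a[OF nz(1)] b[OF nz(2)])
    also have "\<dots> = mpoly_deriv v (Poly_Mapping.single a x) * Poly_Mapping.single b y
        + Poly_Mapping.single a x * mpoly_deriv v (Poly_Mapping.single b y)"
      using nz by (simp add: mult_single mpoly_deriv_single)
    finally show ?thesis .
  qed (simp_all add: mult_single mpoly_deriv_single ab a'[simplified] b[simplified] algebra_simps)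
qed

lemma mpoly_deriv_mult: "mpoly_deriv v (p * q) = mpoly_deriv v p * q + p * mpoly_deriv v q"
proof -
  define P where "P = (\<Sum>a\<in>Poly_Mapping.keys p. Poly_Mapping.single a (Poly_Mapping.lookup p a))"
  define Q where "Q = (\<Sum>b\<in>Poly_Mapping.keys q. Poly_Mapping.single b (Poly_Mapping.lookup q b))"
  have "mpoly_deriv v (P * Q) = mpoly_deriv v P * Q + P * mpoly_deriv v Q"
    unfolding P_def Q_def
    by (simp only: sum_product mpoly_deriv_sum mpoly_deriv_mult_single sum.distrib)
  moreover have "p = P" "q = Q"
    unfolding P_def Q_def by (rule mpoly_sum_single_lookup)+
  ultimately show ?thesis by simp
qed

lemma mpoly_deriv_const [simp]: "mpoly_deriv v (Poly_Mapping.single 0 c) = 0"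
  by (simp add: mpoly_deriv_single)

lemma mpoly_deriv_1 [simp]: "mpoly_deriv v 1 = 0"
  using mpoly_deriv_const[of v 1] by simp

fun mpoly_derivs :: "(nat \<times> nat \<times> nat) list \<Rightarrow> 'a::comm_ring_1 mpoly \<Rightarrow> 'a mpoly" where
  "mpoly_derivs [] p = p"
| "mpoly_derivs (v # vs) p = mpoly_deriv v (mpoly_derivs vs p)"

lemma mpoly_derivs_sum: "mpoly_derivs vs (sum f A) = (\<Sum>a\<in>A. mpoly_derivs vs (f a))"
  by (induction vs) (auto simp: mpoly_deriv_sum)

section \<open>Polynomials as a vector space over the coefficient field\<close>

definition mpoly_scale :: "'a::comm_ring_1 \<Rightarrow> 'a mpoly \<Rightarrow> 'a mpoly" where
  "mpoly_scale c p = Poly_Mapping.single 0 c * p"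

interpretation mpoly: vector_space "mpoly_scale :: 'a::field \<Rightarrow> 'a mpoly \<Rightarrow> 'a mpoly"
  by unfold_locales
    (simp_all add: mpoly_scale_def distrib_left single_add distrib_right mult_single mult.assoc[symmetric])

lemma mpoly_deriv_scale: "mpoly_deriv v (mpoly_scale c p) = mpoly_scale c (mpoly_deriv v p)"
  by (simp add: mpoly_scale_def mpoly_deriv_mult)

lemma mpoly_deriv_in_span:
  fixes S :: "'a::field mpoly set"
  assumes closed: "\<And>x. x \<in> S \<Longrightarrow> mpoly_deriv v x \<in> mpoly.span S" and "x \<in> mpoly.span S"
  shows "mpoly_deriv v x \<in> mpoly.span S"
  using assms(2)
proof (induction rule: mpoly.span_induct_alt)
  case base then show ?case by (simp add: mpoly.span_zero)
next
  case (step c x y)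
  then show ?case
    using closed by (simp add: mpoly_deriv_add mpoly_deriv_scale mpoly.span_add mpoly.span_scale)
qed

lemma mpoly_derivs_in_span:
  fixes S :: "'a::field mpoly set"
  assumes "\<And>v x. x \<in> S \<Longrightarrow> mpoly_deriv v x \<in> mpoly.span S" and "x \<in> mpoly.span S"
  shows "mpoly_derivs vs x \<in> mpoly.span S"
  by (induction vs) (auto intro: mpoly_deriv_in_span assms)

lemma mult_in_span_image:
  fixes l :: "'a::field mpoly"
  assumes "x \<in> mpoly.span S"
  shows "l * x \<in> mpoly.span ((*) l ` S)"
  using assms
proof (induction rule: mpoly.span_induct_alt)
  case base then show ?case by (simp add: mpoly.span_zero)
next
  case (step c x y)
  have "l * (mpoly_scale c x + y) = mpoly_scale c (l * x) + l * y"
    by (simp add: mpoly_scale_def algebra_simps)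
  moreover have "l * x \<in> mpoly.span ((*) l ` S)"
    using step by (intro mpoly.span_base) auto
  ultimately show ?case
    using step by (simp add: mpoly.span_add mpoly.span_scale)
qed

lemma single_one_eq_iff [simp]:
  "Poly_Mapping.single m (1::'a::zero_neq_one) = Poly_Mapping.single m' 1 \<longleftrightarrow> m = m'"
  by (metis lookup_single_eq lookup_single_not_eq zero_neq_one)

lemma independent_monomials:
  "mpoly.independent ((\<lambda>m. Poly_Mapping.single m (1::'a::field)) ` M)"
  unfolding mpoly.dependent_explicit
proof clarify
  fix t u v
  assume t: "finite t" "t \<subseteq> (\<lambda>m. Poly_Mapping.single m (1::'a)) ` M"
    and zero: "(\<Sum>w\<in>t. mpoly_scale (u w) w) = 0" and v: "v \<in> t" "u v \<noteq> 0"
  obtain m where m: "v = Poly_Mapping.single m 1" using v t by auto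
  have "Poly_Mapping.lookup (mpoly_scale (u w) w) m = (if w = v then u w else 0)" if w: "w \<in> t" for w
  proof -
    obtain m' where "w = Poly_Mapping.single m' 1" using w t by auto
    with m show ?thesis
      by (auto simp: mpoly_scale_def mult_single lookup_single when_def)
  qed
  then have "Poly_Mapping.lookup (\<Sum>w\<in>t. mpoly_scale (u w) w) m = u v"
    using t v by (simp add: lookup_sum sum.delta' cong: sum.cong)
  with zero v show False by simp
qed

section \<open>Products of homogeneous linear forms\<close>

lemma mdeg_1_imp_single:
  assumes "mdeg m = 1" "Poly_Mapping.lookup m v \<noteq> 0"
  shows "m = Poly_Mapping.single v 1"
proof -
  have v: "v \<in> Poly_Mapping.keys m" using assms(2) by (simp add: in_keys_iff)
  then have "mdeg m = Poly_Mapping.lookup m v + (\<Sum>w\<in>Poly_Mapping.keys m - {v}. Poly_Mapping.lookup m w)"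
    unfolding mdeg_def by (simp add: sum.remove)
  with assms have "Poly_Mapping.lookup m v = 1"
    and "(\<Sum>w\<in>Poly_Mapping.keys m - {v}. Poly_Mapping.lookup m w) = 0"
    by linarith+
  then show ?thesis
    by (intro poly_mapping_eqI) (auto simp: lookup_single when_def in_keys_iff)
qed

lemma single_sum: "Poly_Mapping.single k (sum f A) = (\<Sum>a\<in>A. Poly_Mapping.single k (f a))"
  by (induction A rule: infinite_finite_induct) (auto simp: single_add)

lemma mpoly_deriv_hom_linear:
  assumes "hom_linear (l :: 'a::comm_ring_1 mpoly)"
  shows "\<exists>c. mpoly_deriv v l = Poly_Mapping.single 0 c"
proof -
  have const: "\<exists>c. mpoly_deriv v (Poly_Mapping.single m (Poly_Mapping.lookup l m)) = Poly_Mapping.single 0 c"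
    if "m \<in> Poly_Mapping.keys l" for m
  proof (cases "Poly_Mapping.lookup m v = 0")
    case False
    moreover have "mdeg m = 1" using assms that by (simp add: hom_linear_def)
    ultimately have "m = Poly_Mapping.single v 1" by (rule mdeg_1_imp_single[rotated])
    then show ?thesis by (simp add: mpoly_deriv_single) blast
  qed (auto simp: mpoly_deriv_single intro: exI[of _ 0])
  then obtain c where
    "\<And>m. m \<in> Poly_Mapping.keys l \<Longrightarrow>
       mpoly_deriv v (Poly_Mapping.single m (Poly_Mapping.lookup l m)) = Poly_Mapping.single 0 (c m)"
    by metis
  then have "mpoly_deriv v l = (\<Sum>m\<in>Poly_Mapping.keys l. Poly_Mapping.single 0 (c m))"
    by (subst mpoly_sum_single_lookup) (simp add: mpoly_deriv_sum)
  also have "\<dots> = Poly_Mapping.single 0 (sum c (Poly_Mapping.keys l))"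
    by (simp add: single_sum)
  finally show ?thesis by blast
qed

fun subproducts :: "'a::comm_ring_1 mpoly list \<Rightarrow> 'a mpoly set" where
  "subproducts [] = {1}"
| "subproducts (l # P) = subproducts P \<union> (*) l ` subproducts P"

lemma finite_subproducts: "finite (subproducts P)"
  by (induction P) auto

lemma card_subproducts_le: "card (subproducts P) \<le> 2 ^ length P"
proof (induction P)
  case (Cons l P)
  have "card (subproducts (l # P)) \<le> card (subproducts P) + card ((*) l ` subproducts P)"
    by (simp add: card_Un_le)
  also have "\<dots> \<le> 2 * card (subproducts P)"
    using card_image_le[OF finite_subproducts] by simp
  finally show ?case using Cons by simp
qed simp

lemma prod_list_in_subproducts: "prod_list P \<in> subproducts P"
  by (induction P) auto

text \<open>The Leibniz rule together with constant derivatives of the factors.\<close>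

lemma mpoly_deriv_subproducts:
  fixes P :: "'a::field mpoly list"
  assumes "\<forall>l\<in>set P. hom_linear l" "q \<in> subproducts P"
  shows "mpoly_deriv v q \<in> mpoly.span (subproducts P)"
  using assms
proof (induction P arbitrary: q)
  case Nil then show ?case by (simp add: mpoly.span_zero)
next
  case (Cons l P)
  have span_P: "mpoly.span (subproducts P) \<subseteq> mpoly.span (subproducts (l # P))"
    "mpoly.span ((*) l ` subproducts P) \<subseteq> mpoly.span (subproducts (l # P))"
    by (simp_all add: mpoly.span_mono)
  from Cons.prems(2) consider "q \<in> subproducts P" | q' where "q' \<in> subproducts P" "q = l * q'"
    by auto
  then show ?case
  proof cases
    case 1 then show ?thesis using Cons span_P by auto
  next
    case 2
    obtain c where c: "mpoly_deriv v l = Poly_Mapping.single 0 c"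
      using mpoly_deriv_hom_linear[of l v] Cons.prems(1) by auto
    have "mpoly_deriv v q = mpoly_scale c q' + l * mpoly_deriv v q'"
      using 2 c by (simp add: mpoly_deriv_mult mpoly_scale_def)
    moreover have "mpoly_scale c q' \<in> mpoly.span (subproducts (l # P))"
      using 2 by (intro mpoly.span_scale mpoly.span_base) auto
    moreover have "mpoly_deriv v q' \<in> mpoly.span (subproducts P)"
      using Cons 2 by simp
    then have "l * mpoly_deriv v q' \<in> mpoly.span (subproducts (l # P))"
      using mult_in_span_image span_P(2) by blast
    ultimately show ?thesis by (simp add: mpoly.span_add)
  qed
qed

section \<open>Homogeneous components\<close>

definition homogeneous :: "nat \<Rightarrow> 'a::comm_ring_1 mpoly \<Rightarrow> bool" where
  "homogeneous e p \<longleftrightarrow> (\<forall>m\<in>Poly_Mapping.keys p. mdeg m = e)"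

lemma mdeg_eq_sum_superset:
  "finite S \<Longrightarrow> Poly_Mapping.keys m \<subseteq> S \<Longrightarrow> mdeg m = (\<Sum>v\<in>S. Poly_Mapping.lookup m v)"
  unfolding mdeg_def by (rule sum.mono_neutral_left) (auto simp: in_keys_iff)

lemma mdeg_add: "mdeg (a + b) = mdeg a + mdeg b"
proof -
  let ?S = "Poly_Mapping.keys a \<union> Poly_Mapping.keys b \<union> Poly_Mapping.keys (a + b)"
  have "mdeg a = (\<Sum>v\<in>?S. Poly_Mapping.lookup a v)" "mdeg b = (\<Sum>v\<in>?S. Poly_Mapping.lookup b v)"
    "mdeg (a + b) = (\<Sum>v\<in>?S. Poly_Mapping.lookup (a + b) v)"
    by (intro mdeg_eq_sum_superset; auto)+
  then show ?thesis by (simp add: lookup_add sum.distrib)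
qed

lemma mdeg_0 [simp]: "mdeg 0 = 0"
  by (simp add: mdeg_def)

lemma homogeneous_0 [simp]: "homogeneous e 0"
  by (simp add: homogeneous_def)

lemma homogeneous_1 [simp]: "homogeneous 0 1"
  by (simp add: homogeneous_def)

lemma homogeneous_mult: "homogeneous e p \<Longrightarrow> homogeneous f q \<Longrightarrow> homogeneous (e + f) (p * q)"
  unfolding homogeneous_def using keys_mult[of p q] by (force simp: mdeg_add)

lemma homogeneous_add: "homogeneous e p \<Longrightarrow> homogeneous e q \<Longrightarrow> homogeneous e (p + q)"
  unfolding homogeneous_def using keys_add[of p q] by blast

lemma homogeneous_diff:
  "homogeneous e p \<Longrightarrow> homogeneous e q \<Longrightarrow> homogeneous e (p - (q :: 'a::comm_ring_1 mpoly))"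
  unfolding homogeneous_def by (auto simp: in_keys_iff lookup_minus)

lemma homogeneous_sum: "(\<And>a. a \<in> A \<Longrightarrow> homogeneous e (f a)) \<Longrightarrow> homogeneous e (sum f A)"
  by (induction A rule: infinite_finite_induct) (auto intro: homogeneous_add)

lemma homogeneous_sum_list:
  "(\<And>x. x \<in> set xs \<Longrightarrow> homogeneous e (f x)) \<Longrightarrow> homogeneous e (sum_list (map f xs))"
  by (induction xs) (auto intro: homogeneous_add)

lemma homogeneous_prod_list:
  "\<forall>l\<in>set P. hom_linear l \<Longrightarrow> homogeneous (length P) (prod_list P)"
proof (induction P)
  case (Cons l P)
  then have "homogeneous 1 l" by (simp add: homogeneous_def hom_linear_def)
  with Cons show ?case using homogeneous_mult[of 1 l "length P" "prod_list P"] by simp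
qed simp

lemma homogeneous_matprod: "homogeneous t (matprod n t j k)"
proof (induction t arbitrary: k)
  case 0 then show ?case by simp
next
  case (Suc t)
  have "homogeneous 1 (mvar i j k)" for i j k
    by (simp add: homogeneous_def mvar_def mdeg_def)
  with Suc.IH show ?case
    by (auto intro!: homogeneous_sum homogeneous_mult[where f = 1, simplified])
qed

lemma sum_list_map_filter_split:
  "sum_list (map f xs) = sum_list (map f (filter P xs)) + sum_list (map f (filter (\<lambda>x. \<not> P x) xs))"
  for f :: "_ \<Rightarrow> 'b::comm_monoid_add"
  by (induction xs) (auto simp: algebra_simps)

lemma keys_sum_list: "Poly_Mapping.keys (sum_list xs) \<subseteq> (\<Union>x\<in>set xs. Poly_Mapping.keys x)"
proof (induction xs)
  case (Cons x xs)
  then show ?case using keys_add[of x "sum_list xs"] by auto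
qed simp

lemma zero_if_homogeneous_and_avoiding_degree:
  "homogeneous e p \<Longrightarrow> (\<forall>m\<in>Poly_Mapping.keys p. mdeg m \<noteq> e) \<Longrightarrow> p = 0"
  unfolding homogeneous_def by auto

lemma SPS_eval_homogeneous:
  fixes C :: "'a::comm_ring_1 mpoly list list"
  assumes "hom_SPS C" "SPS_eval C = f" "homogeneous d f"
  shows "f = sum_list (map prod_list (filter (\<lambda>P. length P = d) C))"
proof -
  let ?f_d = "sum_list (map prod_list (filter (\<lambda>P. length P = d) C))"
  let ?rest = "sum_list (map prod_list (filter (\<lambda>P. length P \<noteq> d) C))"
  have "f = ?f_d + ?rest"
    using assms(2) unfolding SPS_eval_def by (metis sum_list_map_filter_split)
  moreover have "homogeneous d ?f_d"
    using assms(1) by (intro homogeneous_sum_list) (auto simp: hom_SPS_def intro!: homogeneous_prod_list)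
  ultimately have "homogeneous d ?rest"
    using homogeneous_diff[OF assms(3)] by (metis add_diff_cancel_left')
  moreover have "\<forall>m\<in>Poly_Mapping.keys ?rest. mdeg m \<noteq> d"
  proof
    fix m assume "m \<in> Poly_Mapping.keys ?rest"
    then obtain P where P: "P \<in> set C" "length P \<noteq> d" "m \<in> Poly_Mapping.keys (prod_list P)"
      using keys_sum_list by fastforce
    moreover have "homogeneous (length P) (prod_list P)"
      using assms(1) P(1) by (auto simp: hom_SPS_def intro!: homogeneous_prod_list)
    ultimately show "mdeg m \<noteq> d" by (auto simp: homogeneous_def)
  qed
  ultimately have "?rest = 0" by (rule zero_if_homogeneous_and_avoiding_degree)
  with \<open>f = ?f_d + ?rest\<close> show ?thesis by simp
qed

section \<open>Monomials of the iterated matrix product\<close>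

text \<open>Paths are normalised to 0 beyond t so that there are finitely many of them.\<close>

definition paths :: "nat \<Rightarrow> nat \<Rightarrow> nat \<Rightarrow> nat \<Rightarrow> (nat \<Rightarrow> nat) set" where
  "paths n t j k = {g. g 0 = j \<and> g t = k \<and> (\<forall>i<t. g i < n) \<and> (\<forall>i>t. g i = 0)}"

definition path_monomial :: "nat set \<Rightarrow> (nat \<Rightarrow> nat) \<Rightarrow> (nat \<times> nat \<times> nat) \<Rightarrow>\<^sub>0 nat" where
  "path_monomial A g = (\<Sum>i\<in>A. Poly_Mapping.single (i, g i, g (Suc i)) 1)"

lemma finite_paths: "finite (paths n t j k)"
proof -
  have "paths n t j k \<subseteq> {g. \<forall>x. (x \<in> {..t} \<longrightarrow> g x \<in> {..n+j+k}) \<and> (x \<notin> {..t} \<longrightarrow> g x = 0)}"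
  proof
    fix g assume g: "g \<in> paths n t j k"
    have "g x \<le> n + j + k" if "x \<le> t" for x
      using g that by (cases "x < t") (fastforce simp: paths_def)+
    then show "g \<in> {g. \<forall>x. (x \<in> {..t} \<longrightarrow> g x \<in> {..n+j+k}) \<and> (x \<notin> {..t} \<longrightarrow> g x = 0)}"
      using g by (auto simp: paths_def)
  qed
  moreover have "finite {g. \<forall>x. (x \<in> {..t} \<longrightarrow> g x \<in> {..n+j+k}) \<and> (x \<notin> {..t} \<longrightarrow> (g::nat \<Rightarrow> nat) x = 0)}"
    by (rule finite_set_of_finite_funs) auto
  ultimately show ?thesis by (rule finite_subset)
qed

lemma paths_Suc_with_penultimate:
  assumes "l < n"
  shows "{g \<in> paths n (Suc t) j k. g t = l} = (\<lambda>g. g(Suc t := k)) ` paths n t j l"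
proof (intro equalityI subsetI)
  fix g assume g: "g \<in> {g \<in> paths n (Suc t) j k. g t = l}"
  then have "g(Suc t := 0) \<in> paths n t j l" "g = (g(Suc t := 0))(Suc t := k)"
    using assms by (auto simp: paths_def)
  then show "g \<in> (\<lambda>g. g(Suc t := k)) ` paths n t j l" by blast
next
  fix g' assume "g' \<in> (\<lambda>g. g(Suc t := k)) ` paths n t j l"
  then obtain g where g: "g \<in> paths n t j l" "g' = g(Suc t := k)" by auto
  have "g' i < n" if "i < Suc t" for i
    using that g assms by (cases "i = t") (auto simp: paths_def)
  then show "g' \<in> {g \<in> paths n (Suc t) j k. g t = l}"
    using g by (auto simp: paths_def)
qed

lemma inj_on_paths_extend: "inj_on (\<lambda>g. g(Suc t := k)) (paths n t j l)"
proof (rule inj_onI)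
  fix g1 g2 assume "g1 \<in> paths n t j l" "g2 \<in> paths n t j l" "g1(Suc t := k) = g2(Suc t := k)"
  then show "g1 = g2" by (auto simp: paths_def fun_eq_iff) (metis fun_upd_other lessI)
qed

lemma sum_paths_Suc:
  "(\<Sum>g\<in>paths n (Suc t) j k. f g) = (\<Sum>l<n. \<Sum>g\<in>paths n t j l. f (g(Suc t := k)))"
proof -
  have "(\<lambda>g. g t) ` paths n (Suc t) j k \<subseteq> {..<n}" by (auto simp: paths_def)
  then have "(\<Sum>g\<in>paths n (Suc t) j k. f g) = (\<Sum>l<n. \<Sum>g\<in>{g \<in> paths n (Suc t) j k. g t = l}. f g)"
    by (intro sum.group[OF finite_paths, symmetric]) simp_all
  also have "\<dots> = (\<Sum>l<n. \<Sum>g\<in>paths n t j l. f (g(Suc t := k)))"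
  proof (rule sum.cong[OF refl])
    fix l assume "l \<in> {..<n}"
    then show "(\<Sum>g\<in>{g \<in> paths n (Suc t) j k. g t = l}. f g) = (\<Sum>g\<in>paths n t j l. f (g(Suc t := k)))"
      by (simp add: paths_Suc_with_penultimate sum.reindex[OF inj_on_paths_extend])
  qed
  finally show ?thesis .
qed

lemma paths_0: "paths n 0 j k = (if j = k then {\<lambda>i. if i = 0 then j else 0} else {})"
  by (auto simp: paths_def fun_eq_iff)

lemma card_paths: "j < n \<Longrightarrow> card (paths n (Suc t) j k) = n ^ t"
proof (induction t arbitrary: k)
  case 0
  have "card (paths n 1 j k) = (\<Sum>l<n. card (paths n 0 j l))"
    using sum_paths_Suc[where f = "\<lambda>_. 1::nat" and t = 0] by simp
  also have "\<dots> = (\<Sum>l<n. if l = j then 1 else 0)"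
    by (intro sum.cong refl) (auto simp: paths_0)
  finally show ?case using 0 by simp
next
  case (Suc t)
  then show ?case
    using sum_paths_Suc[where f = "\<lambda>_. 1::nat" and t = "Suc t"] by simp
qed

lemma path_monomial_extend:
  "g \<in> paths n t j l \<Longrightarrow>
     path_monomial {..<Suc t} (g(Suc t := k)) = path_monomial {..<t} g + Poly_Mapping.single (t, l, k) 1"
  unfolding path_monomial_def by (simp add: paths_def)

lemma matprod_eq_sum_paths:
  "(matprod n t j k :: 'a::comm_ring_1 mpoly) =
     (\<Sum>g\<in>paths n t j k. Poly_Mapping.single (path_monomial {..<t} g) 1)"
proof (induction t arbitrary: k)
  case 0 then show ?case by (simp add: paths_0 path_monomial_def)
next
  case (Suc t)
  have "(matprod n (Suc t) j k :: 'a mpoly) =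
      (\<Sum>l<n. \<Sum>g\<in>paths n t j l. Poly_Mapping.single (path_monomial {..<t} g + Poly_Mapping.single (t, l, k) 1) 1)"
    by (simp add: Suc.IH sum_distrib_right mvar_def mult_single)
  also have "\<dots> = (\<Sum>l<n. \<Sum>g\<in>paths n t j l. Poly_Mapping.single (path_monomial {..<Suc t} (g(Suc t := k))) 1)"
    by (intro sum.cong refl) (simp add: path_monomial_extend)
  also have "\<dots> = (\<Sum>g\<in>paths n (Suc t) j k. Poly_Mapping.single (path_monomial {..<Suc t} g) 1)"
    by (simp add: sum_paths_Suc)
  finally show ?case .
qed

section \<open>Derivatives of the matrix product\<close>

definition var_monomial :: "(nat \<times> nat \<times> nat) list \<Rightarrow> (nat \<times> nat \<times> nat) \<Rightarrow>\<^sub>0 nat" where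
  "var_monomial vs = sum_list (map (\<lambda>v. Poly_Mapping.single v 1) vs)"

lemma lookup_var_monomial_notin: "v \<notin> set vs \<Longrightarrow> Poly_Mapping.lookup (var_monomial vs) v = 0"
  by (induction vs) (auto simp: var_monomial_def lookup_add lookup_single)

lemma mpoly_derivs_single_multilinear:
  assumes "distinct vs" "\<forall>v\<in>set vs. Poly_Mapping.lookup m v \<le> 1"
  shows "mpoly_derivs vs (Poly_Mapping.single m (1::'a::comm_ring_1)) =
    (if \<forall>v\<in>set vs. Poly_Mapping.lookup m v = 1 then Poly_Mapping.single (m - var_monomial vs) 1 else 0)"
  using assms
proof (induction vs)
  case Nil then show ?case by (simp add: var_monomial_def)
next
  case (Cons v vs)
  show ?case
  proof (cases "\<forall>w\<in>set vs. Poly_Mapping.lookup m w = 1")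
    case True
    with Cons have IH: "mpoly_derivs vs (Poly_Mapping.single m (1::'a)) = Poly_Mapping.single (m - var_monomial vs) 1"
      by simp
    have v: "Poly_Mapping.lookup (m - var_monomial vs) v = Poly_Mapping.lookup m v"
      using Cons.prems lookup_var_monomial_notin[of v vs] by (simp add: lookup_minus)
    have "m - var_monomial vs - Poly_Mapping.single v 1 = m - var_monomial (v # vs)"
      by (simp add: var_monomial_def diff_diff_add add.commute)
    then show ?thesis
      using True IH v Cons.prems by (auto simp: mpoly_deriv_single le_Suc_eq)
  next
    case False
    have "mpoly_derivs vs (Poly_Mapping.single m (1::'a)) =
        (if \<forall>w\<in>set vs. Poly_Mapping.lookup m w = 1 then Poly_Mapping.single (m - var_monomial vs) 1 else 0)"
      using Cons.IH Cons.prems by simp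
    then have "mpoly_derivs vs (Poly_Mapping.single m (1::'a)) = 0"
      unfolding if_not_P[OF False] .
    with False show ?thesis by auto
  qed
qed

lemma lookup_path_monomial:
  "finite A \<Longrightarrow> Poly_Mapping.lookup (path_monomial A g) (a, b, c) =
     (if a \<in> A \<and> g a = b \<and> g (Suc a) = c then 1 else 0)"
proof -
  assume "finite A"
  have "Poly_Mapping.lookup (path_monomial A g) (a, b, c) =
      (\<Sum>i\<in>A. if i = a then (if g a = b \<and> g (Suc a) = c then 1 else 0) else 0)"
    unfolding path_monomial_def lookup_sum by (intro sum.cong refl) (auto simp: lookup_single when_def)
  with \<open>finite A\<close> show ?thesis by (simp add: sum.delta')
qed

lemma path_monomial_even_odd:
  "path_monomial {..<d} g = path_monomial {i. i < d \<and> even i} g + path_monomial {i. i < d \<and> odd i} g"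
proof -
  have "{..<d} = {i. i < d \<and> even i} \<union> {i. i < d \<and> odd i}" by auto
  then show ?thesis unfolding path_monomial_def by (simp add: sum.union_disjoint[symmetric] disjoint_iff)
qed

lemma paths_eqI:
  assumes "g1 \<in> paths n d j k" "g2 \<in> paths n d j k"
    and edges: "\<And>i. i < d \<Longrightarrow> even i = b \<Longrightarrow> g1 i = g2 i \<and> g1 (Suc i) = g2 (Suc i)"
  shows "g1 = g2"
proof
  fix x
  show "g1 x = g2 x"
  proof (cases "x = 0 \<or> d \<le> x")
    case True
    then consider "x = 0" | "x = d" | "d < x" by linarith
    then show ?thesis using assms(1,2) by cases (auto simp: paths_def)
  next
    case False
    then obtain y where "x = Suc y" "Suc y < d" by (cases x) auto
    then show ?thesis using edges[of x] edges[of y] by (cases "even y = b") auto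
  qed
qed

lemma inj_on_even_path_monomial: "inj_on (path_monomial {i. i < d \<and> even i}) (paths n d j k)"
proof (rule inj_onI)
  fix g1 g2 assume g: "g1 \<in> paths n d j k" "g2 \<in> paths n d j k"
    and eq: "path_monomial {i. i < d \<and> even i} g1 = path_monomial {i. i < d \<and> even i} g2"
  show "g1 = g2"
  proof (rule paths_eqI[OF g, where b = True])
    fix i assume "i < d" "even i = True"
    then have "Poly_Mapping.lookup (path_monomial {i. i < d \<and> even i} g2) (i, g1 i, g1 (Suc i)) = 1"
      by (simp add: eq[symmetric] lookup_path_monomial)
    then show "g1 i = g2 i \<and> g1 (Suc i) = g2 (Suc i)"
      by (simp add: lookup_path_monomial split: if_splits)
  qed
qed

definition odd_edges :: "nat \<Rightarrow> (nat \<Rightarrow> nat) \<Rightarrow> (nat \<times> nat \<times> nat) list" where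
  "odd_edges d g = map (\<lambda>i. (i, g i, g (Suc i))) (filter odd [0..<d])"

lemma var_monomial_odd_edges: "var_monomial (odd_edges d g) = path_monomial {i. i < d \<and> odd i} g"
proof -
  have "var_monomial (odd_edges d g) =
      (\<Sum>i\<in>set (filter odd [0..<d]). Poly_Mapping.single (i, g i, g (Suc i)) 1)"
    unfolding var_monomial_def odd_edges_def by (simp add: o_def sum_list_distinct_conv_sum_set)
  also have "set (filter odd [0..<d]) = {i. i < d \<and> odd i}" by auto
  finally show ?thesis by (simp add: path_monomial_def)
qed

lemma mpoly_derivs_odd_edges_matprod:
  assumes h: "h \<in> paths n d j k"
  shows "mpoly_derivs (odd_edges d h) (matprod n d j k :: 'a::comm_ring_1 mpoly) =
    Poly_Mapping.single (path_monomial {i. i < d \<and> even i} h) 1"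
proof -
  let ?vs = "odd_edges d h"
  have "set ?vs = (\<lambda>i. (i, h i, h (Suc i))) ` {i. i < d \<and> odd i}"
    by (auto simp: odd_edges_def)
  then have mult_1: "\<forall>v\<in>set ?vs. Poly_Mapping.lookup (path_monomial {..<d} g) v \<le> 1"
    and hits: "(\<forall>v\<in>set ?vs. Poly_Mapping.lookup (path_monomial {..<d} g) v = 1) \<longleftrightarrow> g = h"
    if "g \<in> paths n d j k" for g
    using paths_eqI[OF that h, where b = False]
    by (auto simp: lookup_path_monomial split: if_splits)
  have "mpoly_derivs ?vs (matprod n d j k :: 'a mpoly) =
      (\<Sum>g\<in>paths n d j k. if g = h then Poly_Mapping.single (path_monomial {..<d} h - var_monomial ?vs) 1 else 0)"
    unfolding matprod_eq_sum_paths mpoly_derivs_sum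
  proof (rule sum.cong[OF refl])
    fix g assume g: "g \<in> paths n d j k"
    have "distinct ?vs" by (simp add: odd_edges_def distinct_map inj_on_def)
    from mpoly_derivs_single_multilinear[OF this mult_1[OF g]] hits[OF g]
    show "mpoly_derivs ?vs (Poly_Mapping.single (path_monomial {..<d} g) (1::'a)) =
        (if g = h then Poly_Mapping.single (path_monomial {..<d} h - var_monomial ?vs) 1 else 0)"
      by (cases "g = h") auto
  qed
  also have "\<dots> = Poly_Mapping.single (path_monomial {..<d} h - var_monomial ?vs) 1"
    using h by (simp add: finite_paths)
  also have "path_monomial {..<d} h - var_monomial ?vs = path_monomial {i. i < d \<and> even i} h"
    by (simp add: path_monomial_even_odd var_monomial_odd_edges)
  finally show ?thesis .
qed

lemma matprod_independent_derivatives: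
  assumes "j < n" "d \<ge> 1"
  shows "\<exists>S. mpoly.independent S \<and> card S = n ^ (d - 1) \<and>
    S \<subseteq> {mpoly_derivs vs (matprod n d j k :: 'a::field mpoly) | vs. True}"
proof (intro exI conjI)
  let ?mono = "\<lambda>g. Poly_Mapping.single (path_monomial {i. i < d \<and> even i} g) (1::'a)"
  show "mpoly.independent (?mono ` paths n d j k)"
    using independent_monomials[of "path_monomial {i. i < d \<and> even i} ` paths n d j k"]
    by (simp add: image_image)
  have "inj_on ?mono (paths n d j k)"
    using inj_on_even_path_monomial by (simp add: inj_on_def)
  then show "card (?mono ` paths n d j k) = n ^ (d - 1)"
    using card_paths[of j n "d - 1" k] assms by (simp add: card_image)
  show "?mono ` paths n d j k \<subseteq> {mpoly_derivs vs (matprod n d j k) | vs. True}"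
    by (fastforce simp flip: mpoly_derivs_odd_edges_matprod)
qed

lemma card_independent_derivatives_le:
  fixes F :: "'a::field mpoly"
  assumes "finite T" "F \<in> mpoly.span T" "\<And>v x. x \<in> T \<Longrightarrow> mpoly_deriv v x \<in> mpoly.span T"
    and "mpoly.independent S" "S \<subseteq> {mpoly_derivs vs F | vs. True}"
  shows "card S \<le> card T"
proof -
  have "S \<subseteq> mpoly.span T"
    using assms(2,3,5) mpoly_derivs_in_span by blast
  with assms(1,4) show ?thesis
    using mpoly.independent_span_bound by blast
qed

definition SPS_subproducts :: "nat \<Rightarrow> 'a::comm_ring_1 mpoly list list \<Rightarrow> 'a mpoly set" where
  "SPS_subproducts d C = (\<Union>P\<in>set (filter (\<lambda>P. length P = d) C). subproducts P)"

lemma card_SPS_subproducts_le: "card (SPS_subproducts d C) \<le> length C * 2 ^ d"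
proof -
  let ?C_d = "filter (\<lambda>P. length P = d) C"
  have "card (SPS_subproducts d C) \<le> (\<Sum>P\<in>set ?C_d. card (subproducts P))"
    unfolding SPS_subproducts_def by (rule card_UN_le) simp
  also have "\<dots> \<le> (\<Sum>P\<in>set ?C_d. 2 ^ d)"
    using card_subproducts_le by (intro sum_mono) fastforce
  also have "\<dots> = card (set ?C_d) * 2 ^ d"
    by simp
  also have "\<dots> \<le> length C * 2 ^ d"
    by (intro mult_le_mono1 order_trans[OF card_length length_filter_le])
  finally show ?thesis .
qed

lemma mpoly_deriv_SPS_subproducts:
  fixes C :: "'a::field mpoly list list"
  assumes "hom_SPS C" "x \<in> SPS_subproducts d C"
  shows "mpoly_deriv v x \<in> mpoly.span (SPS_subproducts d C)"
proof -
  obtain P where P: "P \<in> set C" "length P = d" "x \<in> subproducts P"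
    using assms(2) by (auto simp: SPS_subproducts_def)
  then have "mpoly_deriv v x \<in> mpoly.span (subproducts P)"
    using assms(1) by (intro mpoly_deriv_subproducts) (auto simp: hom_SPS_def)
  moreover have "mpoly.span (subproducts P) \<subseteq> mpoly.span (SPS_subproducts d C)"
    using P by (intro mpoly.span_mono) (auto simp: SPS_subproducts_def)
  ultimately show ?thesis by blast
qed

lemma SPS_eval_in_span_SPS_subproducts:
  fixes C :: "'a::field mpoly list list"
  assumes "hom_SPS C" "homogeneous d (SPS_eval C)"
  shows "SPS_eval C \<in> mpoly.span (SPS_subproducts d C)"
proof -
  let ?C_d = "filter (\<lambda>P. length P = d) C"
  have "sum_list (map prod_list Ps) \<in> mpoly.span (SPS_subproducts d C)" if "set Ps \<subseteq> set ?C_d" for Ps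
    using that prod_list_in_subproducts
    by (induction Ps) (auto simp: SPS_subproducts_def intro: mpoly.span_add mpoly.span_zero mpoly.span_base)
  then have "sum_list (map prod_list ?C_d) \<in> mpoly.span (SPS_subproducts d C)"
    by blast
  with SPS_eval_homogeneous[OF assms(1) refl assms(2)] show ?thesis by simp
qed

theorem theorem5:
  "\<exists>c::real. c > 0 \<and>
     (\<forall>(n::nat) (d::nat) (C::'a::field mpoly list list).
        n \<ge> 1 \<longrightarrow> d \<ge> 1 \<longrightarrow> hom_SPS C \<longrightarrow> SPS_eval C = matprod n d 0 0 \<longrightarrow>
        real (SPS_size C) \<ge> c * real n ^ (d - 1) / 2 ^ d)"
proof (intro exI[of _ 1] conjI allI impI)
  fix n d :: nat and C :: "'a::field mpoly list list"
  assume n: "n \<ge> 1" and d: "d \<ge> 1" and C: "hom_SPS C" and f: "SPS_eval C = matprod n d 0 0"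
  obtain S where S: "mpoly.independent S" "card S = n ^ (d - 1)"
    "S \<subseteq> {mpoly_derivs vs (SPS_eval C) | vs. True}"
    using matprod_independent_derivatives[of 0 n d 0] n d f by auto
  have "finite (SPS_subproducts d C)"
    by (simp add: SPS_subproducts_def finite_subproducts)
  moreover have "SPS_eval C \<in> mpoly.span (SPS_subproducts d C)"
    using C by (rule SPS_eval_in_span_SPS_subproducts) (simp add: f homogeneous_matprod)
  ultimately have "n ^ (d - 1) \<le> card (SPS_subproducts d C)"
    using card_independent_derivatives_le[OF _ _ mpoly_deriv_SPS_subproducts[OF C] S(1,3)] S(2)
    by simp
  also have "\<dots> \<le> SPS_size C * 2 ^ d"
    by (intro order_trans[OF card_SPS_subproducts_le] mult_le_mono1) (simp add: SPS_size_def)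
  finally have "real (n ^ (d - 1)) \<le> real (SPS_size C * 2 ^ d)"
    by (simp only: of_nat_le_iff)
  then show "1 * real n ^ (d - 1) / 2 ^ d \<le> real (SPS_size C)"
    by (simp add: divide_le_eq)
qed simp
end
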